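(* Let $X$ be a topological space with $|X|\ge 2$ and $G$ an infinite Abelian group. If $X$ is not anti-discrete, then every Korovin orbit $G_f$ in $X^G$ is a $T_1$-space.
   Context: $X^G$ carries the product topology. For $f\in X^G$ and $g\in G$ let $gf\in X^G$ be given by $(gf)(x)=f(xg)$, and let $G_f=\{gf:g\in G\}\subseteq X^G$ with the subspace topology. The map $f\colon G\to X$ is a Korovin mapping if $\pi_M(G_f)=X^M$ for every countable $M\subseteq G$, where $\pi_M\colon X^G\to X^M$ is the projection; in that case $G_f$ is called a Korovin orbit. A space is anti-discrete if its only open sets are $\emptyset$ and the whole space. *)

theory Defs
  imports "HOL-Analysis.Analysis"
begin

definition gshift :: "'g::ab_group_add \<Rightarrow> ('g \<Rightarrow> 'a) \<Rightarrow> ('g \<Rightarrow> 'a)" where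
  "gshift g f = (\<lambda>x. f (x + g))"

definition orbit :: "('g::ab_group_add \<Rightarrow> 'a) \<Rightarrow> ('g \<Rightarrow> 'a) set" where
  "orbit f = {gshift g f | g. True}"

definition korovin_mapping :: "'a topology \<Rightarrow> ('g::ab_group_add \<Rightarrow> 'a) \<Rightarrow> bool" where
  "korovin_mapping X f \<longleftrightarrow>
     (\<forall>x. f x \<in> topspace X) \<and>
     (\<forall>M. countable M \<longrightarrow> (\<lambda>h. restrict h M) ` orbit f = (PiE M (\<lambda>_. topspace X)))"

definition anti_discrete :: "'a topology \<Rightarrow> bool" where
  "anti_discrete X \<longleftrightarrow> (\<forall>U. openin X U \<longrightarrow> U = {} \<or> U = topspace X)"

end

theory Submission
  imports Defs
begin

text \<open>Two distinct points gshift a f and gshift b f of a Korovin orbit differ by the shift d = b - a \<noteq> 0.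
  Applying the Korovin property to the countable set {0, d} yields c with f c = u and f (c + d) = v
  for arbitrary u, v; so at the coordinate c - a the two points take the values u and v.  Taking
  u inside and v outside a nonempty proper open set U, the subbasic open set of functions with value
  in U at that coordinate contains the first point but not the second.\<close>

lemma t1_space_subtopology_product_if_separating:
  assumes "openin X U"
    and separating: "\<And>p q. p \<in> S \<Longrightarrow> q \<in> S \<Longrightarrow> p \<noteq> q \<Longrightarrow> \<exists>i\<in>I. p i \<in> U \<and> q i \<notin> U"
  shows "t1_space (subtopology (product_topology (\<lambda>_. X) I) S)"
  unfolding t1_space_def
proof (intro ballI impI)
  let ?P = "product_topology (\<lambda>_. X) I"
  fix p q
  assume p: "p \<in> topspace (subtopology ?P S)" and q: "q \<in> topspace (subtopology ?P S)"
    and "p \<noteq> q"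
  have "p \<in> S" "q \<in> S"
    using p q by auto
  then obtain i where i: "i \<in> I" "p i \<in> U" "q i \<notin> U"
    using separating \<open>p \<noteq> q\<close> by blast
  define W where "W = {h \<in> topspace ?P. h i \<in> U}"
  have "openin ?P W"
    unfolding W_def
    using openin_continuous_map_preimage[OF continuous_map_product_projection[OF i(1)] assms(1)]
    by simp
  then have "openin (subtopology ?P S) (W \<inter> S)"
    by (auto simp: openin_subtopology)
  moreover have "p \<in> W \<inter> S" "q \<notin> W \<inter> S"
    using p i unfolding W_def by auto
  ultimately show "\<exists>W. openin (subtopology ?P S) W \<and> p \<in> W \<and> q \<notin> W"
    by blast
qed

lemma korovin_mapping_attains_pair:
  fixes f :: "'g::ab_group_add \<Rightarrow> 'a"
  assumes "korovin_mapping X f" and "d \<noteq> 0"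
    and "u \<in> topspace X" and "v \<in> topspace X"
  obtains c where "f c = u" and "f (c + d) = v"
proof -
  define M where "M = {0, d}"
  define k where "k = (\<lambda>x::'g. if x = 0 then u else v)"
  have "restrict k M \<in> PiE M (\<lambda>_. topspace X)"
    using assms(3,4) unfolding M_def k_def by auto
  also have "\<dots> = (\<lambda>h. restrict h M) ` orbit f"
    using assms(1) unfolding korovin_mapping_def M_def by auto
  finally obtain g where g: "restrict k M = restrict (gshift g f) M"
    unfolding orbit_def by blast
  have "f g = u" "f (g + d) = v"
    using fun_cong[OF g, of 0] fun_cong[OF g, of d] assms(2)
    unfolding M_def k_def gshift_def by (auto simp: add.commute)
  then show thesis
    using that by blast
qed

lemma korovin_orbit_attains_pair:
  assumes "korovin_mapping X f" and "u \<in> topspace X" and "v \<in> topspace X"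
    and "p \<in> orbit f" and "q \<in> orbit f" and "p \<noteq> q"
  shows "\<exists>i. p i = u \<and> q i = v"
proof -
  obtain a b where a: "p = gshift a f" and b: "q = gshift b f"
    using assms(4,5) by (auto simp: orbit_def)
  then have "b - a \<noteq> 0"
    using assms(6) by auto
  then obtain c where "f c = u" and "f (c + (b - a)) = v"
    using korovin_mapping_attains_pair[OF assms(1) _ assms(2,3)] by blast
  then have "p (c - a) = u" and "q (c - a) = v"
    unfolding a b gshift_def by (simp_all add: algebra_simps)
  then show ?thesis
    by blast
qed

theorem proposition4p1:
  fixes X :: "'a topology" and f :: "'g::ab_group_add \<Rightarrow> 'a"
  assumes "\<exists>x y. x \<in> topspace X \<and> y \<in> topspace X \<and> x \<noteq> y"
    and "infinite (UNIV :: 'g set)"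
    and "\<not> anti_discrete X"
    and "korovin_mapping X f"
  shows "t1_space (subtopology (product_topology (\<lambda>_::'g. X) UNIV) (orbit f))"
proof -
  obtain U where U: "openin X U" "U \<noteq> {}" "U \<noteq> topspace X"
    using assms(3) unfolding anti_discrete_def by blast
  obtain u v where u: "u \<in> U" and v: "v \<in> topspace X" "v \<notin> U"
    using U openin_subset by blast
  have "u \<in> topspace X"
    using U(1) u openin_subset by blast
  then show ?thesis
    using korovin_orbit_attains_pair[OF assms(4) _ v(1)] u v(2)
    by (intro t1_space_subtopology_product_if_separating[OF U(1)]) blast
qed

end
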